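(* Let $V\simeq\mathbb{R}^d$ be a $d$-dimensional real vector space with dual $V^*$, let $\mathcal{X}\subseteq V$ span $V$, and let $\mathcal{Y}\subseteq\mathbb{R}$. Let $\mathcal{G}$ be a compact group with normalized Haar measure $\lambda$ admitting a linear representation $\rho:\mathcal{G}\to GL(V)$, acting on $\mathcal{X}$ via $\rho$, with dual representation $\rho^*_g=\rho_{g^{-1}}^{\top}$. Let $\mathcal{P}$ be a distribution on $\mathcal{X}\times\mathcal{Y}$ invariant under this action of $\mathcal{G}$, and suppose $\mathbb{E}[y\mid \mathbf{x}]=\langle\mathbf{w}^*,\mathbf{x}\rangle$ for some unique $\mathbf{w}^*$. Let $\ell(\mathbf{w})=\mathbb{E}_{(\mathbf{x},y)\sim\mathcal{P}}[(\langle\mathbf{w},\mathbf{x}\rangle-y)^2]$. Then the (global) minimizer $\mathbf{w}^*$ of $\ell$ satisfies $\rho^*_g\mathbf{w}^*=\mathbf{w}^*$ for $\lambda$-almost all $g\in\mathcal{G}$. In particular, the function $f(\mathbf{x})=\langle\mathbf{w}^*,\mathbf{x}\rangle$ is $\mathcal{G}$-invariant.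
   Context: $\mathcal{P}$ invariant means $(\rho_g\mathbf{x},y)$ has the same distribution as $(\mathbf{x},y)$ for all $g\in\mathcal{G}$. A function $f$ is $\mathcal{G}$-invariant if $f(\rho_g\mathbf{x})=f(\mathbf{x})$ for all $g$ and $\mathbf{x}$. *)

theory Defs
  imports "HOL-Analysis.Analysis" "HOL-Probability.Probability" "HOL-Algebra.Group"
begin

definition borel_of_top :: "'a topology \<Rightarrow> 'a measure" where
  "borel_of_top T = sigma (topspace T) {U. openin T U}"

definition compact_topological_group :: "('g, 'b) monoid_scheme \<Rightarrow> 'g topology \<Rightarrow> bool" where
  "compact_topological_group G T \<longleftrightarrow>
     group G \<and> topspace T = carrier G \<and> Hausdorff_space T \<and> compact_space T \<and>
     continuous_map (prod_topology T T) T (\<lambda>(g, h). g \<otimes>\<^bsub>G\<^esub> h) \<and>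
     continuous_map T T (\<lambda>g. inv\<^bsub>G\<^esub> g)"

definition normalized_haar :: "('g, 'b) monoid_scheme \<Rightarrow> 'g topology \<Rightarrow> 'g measure \<Rightarrow> bool" where
  "normalized_haar G T lam \<longleftrightarrow>
     prob_space lam \<and> sets lam = sets (borel_of_top T) \<and> space lam = carrier G \<and>
     (\<forall>g\<in>carrier G. \<forall>A\<in>sets lam.
        (\<lambda>h. g \<otimes>\<^bsub>G\<^esub> h) ` A \<in> sets lam \<and>
        emeasure lam ((\<lambda>h. g \<otimes>\<^bsub>G\<^esub> h) ` A) = emeasure lam A)"

definition linear_rep :: "('g, 'b) monoid_scheme \<Rightarrow> ('g \<Rightarrow> 'v::real_vector \<Rightarrow> 'v) \<Rightarrow> bool" where
  "linear_rep G \<rho> \<longleftrightarrow>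
     (\<forall>g\<in>carrier G. linear (\<rho> g) \<and> bij (\<rho> g)) \<and>
     (\<forall>g\<in>carrier G. \<forall>h\<in>carrier G. \<rho> (g \<otimes>\<^bsub>G\<^esub> h) = \<rho> g \<circ> \<rho> h)"

text \<open>Dual representation on V* (linear functionals): rho*_g = (rho_{g^-1})^T, i.e. w \<mapsto> w \<circ> rho_{g^-1}.\<close>
definition dual_rep :: "('g, 'b) monoid_scheme \<Rightarrow> ('g \<Rightarrow> 'v \<Rightarrow> 'v) \<Rightarrow> 'g \<Rightarrow> ('v \<Rightarrow> real) \<Rightarrow> ('v \<Rightarrow> real)" where
  "dual_rep G \<rho> g w = w \<circ> \<rho> (inv\<^bsub>G\<^esub> g)"

definition sq_loss :: "('v \<times> real) measure \<Rightarrow> ('v \<Rightarrow> real) \<Rightarrow> real" where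
  "sq_loss P w = (\<integral>z. (w (fst z) - snd z)\<^sup>2 \<partial>P)"

text \<open>E[y | x] as a function on the sample space (conditioning on the sigma-algebra generated by x).\<close>
definition cond_exp_y_given_x :: "('v::topological_space \<times> real) measure \<Rightarrow> ('v \<times> real \<Rightarrow> real)" where
  "cond_exp_y_given_x P = real_cond_exp P (vimage_algebra (space P) fst borel) snd"

end

theory Submission
  imports Defs
begin

text \<open>Since w* is a version of E[y | x], the cross term in the expansion of the squared loss
  vanishes and l(w) = l(w*) + E[(w(x) - w*(x))^2] for every linear w. Hence w* is a minimizer,
  and every linear w with l(w) = l(w*) agrees with w* almost surely, so it is again a version of
  E[y | x]. Invariance of P gives l(w* o rho_g) = l(w*), and uniqueness of w* then forces
  w* o rho_g = w* for every g in G, which is more than the almost-everywhere statement.\<close>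

lemma square_integrable_mult:
  fixes f g :: "'a \<Rightarrow> real"
  assumes [measurable]: "f \<in> borel_measurable M" "g \<in> borel_measurable M"
    and "integrable M (\<lambda>x. (f x)\<^sup>2)" "integrable M (\<lambda>x. (g x)\<^sup>2)"
  shows "integrable M (\<lambda>x. f x * g x)"
proof (rule Bochner_Integration.integrable_bound)
  show "integrable M (\<lambda>x. (f x)\<^sup>2 + (g x)\<^sup>2)"
    using assms by auto
  show "AE x in M. norm (f x * g x) \<le> norm ((f x)\<^sup>2 + (g x)\<^sup>2)"
  proof (rule AE_I2)
    fix x
    have "2 * (\<bar>f x\<bar> * \<bar>g x\<bar>) \<le> (f x)\<^sup>2 + (g x)\<^sup>2"
      using sum_squares_bound[of "\<bar>f x\<bar>" "\<bar>g x\<bar>"] by (simp add: mult.assoc)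
    moreover have "0 \<le> \<bar>f x\<bar> * \<bar>g x\<bar>"
      by simp
    ultimately have "\<bar>f x * g x\<bar> \<le> (f x)\<^sup>2 + (g x)\<^sup>2"
      unfolding abs_mult by linarith
    then show "norm (f x * g x) \<le> norm ((f x)\<^sup>2 + (g x)\<^sup>2)"
      by simp
  qed
qed measurable

lemma square_integrable_diff:
  fixes f g :: "'a \<Rightarrow> real"
  assumes "f \<in> borel_measurable M" "g \<in> borel_measurable M"
    and "integrable M (\<lambda>x. (f x)\<^sup>2)" "integrable M (\<lambda>x. (g x)\<^sup>2)"
  shows "integrable M (\<lambda>x. (f x - g x)\<^sup>2)"
proof -
  have "(\<lambda>x. (f x - g x)\<^sup>2) = (\<lambda>x. (f x)\<^sup>2 - 2 * (f x * g x) + (g x)\<^sup>2)"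
    by (simp add: fun_eq_iff power2_diff mult.assoc)
  then show ?thesis
    using assms square_integrable_mult[OF assms] by auto
qed

lemma borel_measurable_linear:
  fixes w :: "'a::euclidean_space \<Rightarrow> 'b::real_normed_vector"
  assumes "linear w"
  shows "w \<in> borel_measurable borel"
  using assms by (intro borel_measurable_continuous_onI linear_continuous_on linear_conv_bounded_linear[THEN iffD1])

lemma square_integrable_linear:
  fixes w :: "'a::euclidean_space \<Rightarrow> real"
  assumes "linear w" and [measurable]: "X \<in> borel_measurable M"
    and "integrable M (\<lambda>x. (norm (X x))\<^sup>2)"
  shows "integrable M (\<lambda>x. (w (X x))\<^sup>2)"
proof -
  obtain K where K: "\<And>v. norm (w v) \<le> norm v * K"
    using assms(1) linear_conv_bounded_linear bounded_linear.bounded by blast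
  note [measurable] = borel_measurable_linear[OF assms(1)]
  show ?thesis
  proof (rule Bochner_Integration.integrable_bound)
    show "integrable M (\<lambda>x. K\<^sup>2 * (norm (X x))\<^sup>2)"
      using assms(3) by simp
    show "AE x in M. norm ((w (X x))\<^sup>2) \<le> norm (K\<^sup>2 * (norm (X x))\<^sup>2)"
    proof (rule AE_I2)
      fix x
      have "\<bar>w (X x)\<bar>\<^sup>2 \<le> (norm (X x) * K)\<^sup>2"
        using K[of "X x"] by (intro power_mono) auto
      then show "norm ((w (X x))\<^sup>2) \<le> norm (K\<^sup>2 * (norm (X x))\<^sup>2)"
        by (simp add: power_mult_distrib mult.commute)
    qed
  qed measurable
qed

lemma (in finite_measure) sigma_finite_subalgebra_vimage_algebra:
  assumes "X \<in> measurable M N"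
  shows "sigma_finite_subalgebra M (vimage_algebra (space M) X N)"
proof (rule finite_measure_subalgebra_is_sigma_finite)
  show "finite_measure_subalgebra M (vimage_algebra (space M) X N)"
    unfolding finite_measure_subalgebra_def finite_measure_subalgebra_axioms_def subalgebra_def
    using sets_image_in_sets[OF refl assms] finite_measure_axioms by simp
qed

text \<open>The cross term vanishes because f - h is F-measurable, hence orthogonal to h - Y.\<close>

lemma (in sigma_finite_subalgebra) real_cond_exp_pythagoras:
  fixes f h Y :: "'a \<Rightarrow> real"
  assumes f_F [measurable]: "f \<in> borel_measurable F"
    and h_F [measurable]: "h \<in> borel_measurable F"
    and [measurable]: "Y \<in> borel_measurable M"
    and f_L2: "integrable M (\<lambda>x. (f x)\<^sup>2)" and h_L2: "integrable M (\<lambda>x. (h x)\<^sup>2)"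
    and Y_L2: "integrable M (\<lambda>x. (Y x)\<^sup>2)"
    and h_ce: "AE x in M. h x = real_cond_exp M F Y x"
  shows "(\<integral>x. (f x - Y x)\<^sup>2 \<partial>M) = (\<integral>x. (h x - Y x)\<^sup>2 \<partial>M) + (\<integral>x. (f x - h x)\<^sup>2 \<partial>M)"
proof -
  define d where "d x = f x - h x" for x
  have [measurable]: "f \<in> borel_measurable M" "h \<in> borel_measurable M"
    using f_F h_F by (auto intro: measurable_from_subalg[OF subalg])
  have d_F [measurable]: "d \<in> borel_measurable F"
    unfolding d_def by measurable
  have [measurable]: "d \<in> borel_measurable M"
    unfolding d_def by measurable
  have d_L2: "integrable M (\<lambda>x. (d x)\<^sup>2)"
    unfolding d_def using f_L2 h_L2 by (intro square_integrable_diff) measurable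
  have e_L2: "integrable M (\<lambda>x. (h x - Y x)\<^sup>2)"
    using h_L2 Y_L2 by (intro square_integrable_diff) measurable
  have dY: "integrable M (\<lambda>x. d x * Y x)"
    using d_L2 Y_L2 by (intro square_integrable_mult) measurable
  have dh: "integrable M (\<lambda>x. d x * h x)"
    using d_L2 h_L2 by (intro square_integrable_mult) measurable
  have de: "integrable M (\<lambda>x. d x * (h x - Y x))"
    using d_L2 e_L2 by (intro square_integrable_mult) measurable
  have "(\<integral>x. d x * h x \<partial>M) = (\<integral>x. d x * real_cond_exp M F Y x \<partial>M)"
    using h_ce by (intro integral_cong_AE) auto
  also have "\<dots> = (\<integral>x. d x * Y x \<partial>M)"
    using real_cond_exp_intg(2)[OF dY d_F] by simp
  finally have orth: "(\<integral>x. d x * (h x - Y x) \<partial>M) = 0"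
    using dh dY by (simp add: right_diff_distrib)
  have "(\<integral>x. (f x - Y x)\<^sup>2 \<partial>M) = (\<integral>x. (h x - Y x)\<^sup>2 + 2 * (d x * (h x - Y x)) + (d x)\<^sup>2 \<partial>M)"
    by (intro Bochner_Integration.integral_cong) (auto simp: d_def power2_eq_square algebra_simps)
  also have "\<dots> = (\<integral>x. (h x - Y x)\<^sup>2 \<partial>M) + 2 * (\<integral>x. d x * (h x - Y x) \<partial>M) + (\<integral>x. (d x)\<^sup>2 \<partial>M)"
    using e_L2 de d_L2 by simp
  finally show ?thesis
    using orth by (simp add: d_def)
qed

locale well_specified_regression = prob_space P
  for P :: "('v::euclidean_space \<times> real) measure" and wstar :: "'v \<Rightarrow> real" +
  assumes sets_P: "sets P = sets borel"
    and y_L2: "integrable P (\<lambda>z. (snd z)\<^sup>2)"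
    and x_L2: "integrable P (\<lambda>z. (norm (fst z))\<^sup>2)"
    and wstar_lin: "linear wstar"
    and wstar_ce: "AE z in P. cond_exp_y_given_x P z = wstar (fst z)"
begin

lemma measurable_fst_P [measurable]: "fst \<in> borel_measurable P"
  and measurable_snd_P [measurable]: "snd \<in> borel_measurable P"
  unfolding measurable_cong_sets[OF sets_P refl]
  by (intro borel_measurable_continuous_onI continuous_intros)+

lemma square_integrable_linear_fst:
  fixes w :: "'v \<Rightarrow> real"
  assumes "linear w"
  shows "integrable P (\<lambda>z. (w (fst z))\<^sup>2)"
  by (rule square_integrable_linear[OF assms _ x_L2]) measurable

lemma sq_loss_decomposition:
  assumes "linear w"
  shows "sq_loss P w = sq_loss P wstar + (\<integral>z. (w (fst z) - wstar (fst z))\<^sup>2 \<partial>P)"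
proof -
  let ?F = "vimage_algebra (space P) fst borel"
  interpret sigma_finite_subalgebra P ?F
    by (rule sigma_finite_subalgebra_vimage_algebra) measurable
  have measurable_F: "(\<lambda>z. u (fst z)) \<in> borel_measurable ?F" if "linear u" for u :: "'v \<Rightarrow> real"
    using measurable_comp[OF measurable_vimage_algebra1 borel_measurable_linear[OF that]]
    by (simp add: o_def)
  show ?thesis
    unfolding sq_loss_def
    using assms wstar_lin wstar_ce y_L2 square_integrable_linear_fst
    by (intro real_cond_exp_pythagoras measurable_F)
      (simp_all add: cond_exp_y_given_x_def eq_commute)
qed

lemma sq_loss_minimal: "linear w \<Longrightarrow> sq_loss P wstar \<le> sq_loss P w"
  using sq_loss_decomposition by simp

lemma cond_exp_eq_if_sq_loss_eq:
  assumes w_lin: "linear w" and "sq_loss P w = sq_loss P wstar"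
  shows "AE z in P. cond_exp_y_given_x P z = w (fst z)"
proof -
  have [measurable]: "w \<in> borel_measurable borel" "wstar \<in> borel_measurable borel"
    using w_lin wstar_lin by (auto intro: borel_measurable_linear)
  have "(\<integral>z. (w (fst z) - wstar (fst z))\<^sup>2 \<partial>P) = 0"
    using assms sq_loss_decomposition by simp
  moreover have "integrable P (\<lambda>z. (w (fst z) - wstar (fst z))\<^sup>2)"
    using w_lin wstar_lin
    by (intro square_integrable_diff square_integrable_linear_fst) measurable
  ultimately have "AE z in P. w (fst z) = wstar (fst z)"
    by (subst (asm) integral_nonneg_eq_0_iff_AE) auto
  with wstar_ce show ?thesis
    by eventually_elim simp
qed

end

lemma sq_loss_comp_eq:
  fixes P :: "('v::second_countable_topology \<times> real) measure"
  assumes sets_P: "sets P = sets borel"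
    and [measurable]: "\<phi> \<in> borel_measurable borel" "w \<in> borel_measurable borel"
    and P_inv: "distr P borel (\<lambda>(x, y). (\<phi> x, y)) = P"
  shows "sq_loss P (w \<circ> \<phi>) = sq_loss P w"
proof -
  have [measurable]: "(\<lambda>(x, y). (\<phi> x, y)) \<in> measurable P borel"
    unfolding measurable_cong_sets[OF sets_P refl] borel_prod[symmetric] by measurable
  have [measurable]: "(\<lambda>z. (w (fst z) - snd z)\<^sup>2) \<in> borel_measurable borel"
    unfolding borel_prod[symmetric] by measurable
  have "sq_loss P w = (\<integral>z. (w (fst z) - snd z)\<^sup>2 \<partial>distr P borel (\<lambda>(x, y). (\<phi> x, y)))"
    unfolding sq_loss_def P_inv ..
  also have "\<dots> = sq_loss P (w \<circ> \<phi>)"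
    unfolding sq_loss_def by (subst integral_distr) (auto simp: split_beta)
  finally show ?thesis ..
qed

theorem proposition3p3:
  fixes G :: "('g, 'b) monoid_scheme" and T :: "'g topology" and lam :: "'g measure"
    and \<rho> :: "'g \<Rightarrow> 'v::euclidean_space \<Rightarrow> 'v"
    and X :: "'v set" and Y :: "real set"
    and P :: "('v \<times> real) measure" and wstar :: "'v \<Rightarrow> real"
  assumes grp: "compact_topological_group G T"
    and haar: "normalized_haar G T lam"
    and rep: "linear_rep G \<rho>"
    and X_span: "span X = UNIV"
    and X_act: "\<forall>g\<in>carrier G. \<rho> g ` X \<subseteq> X"
    and P_prob: "prob_space P" and P_sets: "sets P = sets borel"
    and P_supp: "AE z in P. fst z \<in> X \<and> snd z \<in> Y"
    and P_inv: "\<forall>g\<in>carrier G. distr P borel (\<lambda>(x, y). (\<rho> g x, y)) = P"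
    and y_L2: "integrable P (\<lambda>z. (snd z)\<^sup>2)"
    and x_L2: "integrable P (\<lambda>z. (norm (fst z))\<^sup>2)"
    and wstar_lin: "linear wstar"
    and wstar_ce: "AE z in P. cond_exp_y_given_x P z = wstar (fst z)"
    and wstar_unique: "\<forall>w. linear w \<and> (AE z in P. cond_exp_y_given_x P z = w (fst z)) \<longrightarrow> w = wstar"
  shows "(\<forall>w. linear w \<longrightarrow> sq_loss P wstar \<le> sq_loss P w)
       \<and> (AE g in lam. dual_rep G \<rho> g wstar = wstar)
       \<and> (\<forall>g\<in>carrier G. \<forall>x\<in>X. wstar (\<rho> g x) = wstar x)"
proof -
  interpret well_specified_regression P wstar
    using P_prob P_sets y_L2 x_L2 wstar_lin wstar_ce
    by (simp add: well_specified_regression_def well_specified_regression_axioms_def)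
  have invariant: "wstar \<circ> \<rho> g = wstar" if g: "g \<in> carrier G" for g
  proof (rule wstar_unique[rule_format, OF conjI])
    have "linear (\<rho> g)"
      using rep g unfolding linear_rep_def by blast
    then show lin: "linear (wstar \<circ> \<rho> g)"
      using wstar_lin by (rule linear_compose)
    have "sq_loss P (wstar \<circ> \<rho> g) = sq_loss P wstar"
      using P_sets \<open>linear (\<rho> g)\<close> wstar_lin P_inv g
      by (intro sq_loss_comp_eq borel_measurable_linear) auto
    with lin show "AE z in P. cond_exp_y_given_x P z = (wstar \<circ> \<rho> g) (fst z)"
      by (rule cond_exp_eq_if_sq_loss_eq)
  qed
  have "AE g in lam. dual_rep G \<rho> g wstar = wstar"
  proof (rule AE_I2)
    fix g assume "g \<in> space lam"
    then have "inv\<^bsub>G\<^esub> g \<in> carrier G"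
      using haar grp unfolding normalized_haar_def compact_topological_group_def by auto
    then show "dual_rep G \<rho> g wstar = wstar"
      unfolding dual_rep_def by (rule invariant)
  qed
  moreover have "\<forall>g\<in>carrier G. \<forall>x\<in>X. wstar (\<rho> g x) = wstar x"
    using invariant by (metis comp_apply)
  ultimately show ?thesis
    using sq_loss_minimal by blast
qed

end
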